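(* Let $(\mathbf A,\tau)$ be a state-morphism algebra. For every congruence $\phi$ of the subalgebra $\tau(\mathbf A)$, the relation $\theta_\phi=\{(x,y)\in A\times A:(\tau(x),\tau(y))\in\phi\}$ is a congruence of $(\mathbf A,\tau)$ and $\theta_\phi\cap\tau(A)^2=\phi$. In addition, $\theta_\tau=\{(x,y)\in A\times A:\tau(x)=\tau(y)\}$ is a congruence of $(\mathbf A,\tau)$, $\phi\subseteq\theta_\phi$, and $\Theta_\tau(\phi)\subseteq\theta_\phi$.
   Context: Let $F$ be an arbitrary algebraic type. A state-morphism on an algebra $\mathbf A$ of type $F$ is an endomorphism $\tau:\mathbf A\to\mathbf A$ with $\tau\circ\tau=\tau$; the pair $(\mathbf A,\tau)$, viewed as an algebra of type $F$ extended by the unary operation $\tau$, is a state-morphism algebra. $\tau(A)=\{\tau(x):x\in A\}$ is the universe of a subalgebra $\tau(\mathbf A)$ of $\mathbf A$. $\mathrm{Con}(\mathbf A,\tau)$ denotes the congruences of $\mathbf A$ compatible with $\tau$. For $\phi\subseteq A^2$, $\Theta_\tau(\phi)$ denotes the congruence of $(\mathbf A,\tau)$ generated by $\phi$. *)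

theory Defs
  imports Main
begin

text \<open>An algebra of type F: carrier A, arity function ar on the operation symbols 'f,
  and interpretation ops (an operation symbol f applied to a list of ar f arguments).\<close>

definition algebra :: "'a set \<Rightarrow> ('f \<Rightarrow> nat) \<Rightarrow> ('f \<Rightarrow> 'a list \<Rightarrow> 'a) \<Rightarrow> bool" where
  "algebra A ar ops \<longleftrightarrow>
     (\<forall>f xs. length xs = ar f \<and> set xs \<subseteq> A \<longrightarrow> ops f xs \<in> A)"

definition endomorphism :: "'a set \<Rightarrow> ('f \<Rightarrow> nat) \<Rightarrow> ('f \<Rightarrow> 'a list \<Rightarrow> 'a) \<Rightarrow> ('a \<Rightarrow> 'a) \<Rightarrow> bool" where
  "endomorphism A ar ops \<tau> \<longleftrightarrow>
     (\<forall>x\<in>A. \<tau> x \<in> A) \<and>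
     (\<forall>f xs. length xs = ar f \<and> set xs \<subseteq> A \<longrightarrow> \<tau> (ops f xs) = ops f (map \<tau> xs))"

definition state_morphism :: "'a set \<Rightarrow> ('f \<Rightarrow> nat) \<Rightarrow> ('f \<Rightarrow> 'a list \<Rightarrow> 'a) \<Rightarrow> ('a \<Rightarrow> 'a) \<Rightarrow> bool" where
  "state_morphism A ar ops \<tau> \<longleftrightarrow> endomorphism A ar ops \<tau> \<and> (\<forall>x\<in>A. \<tau> (\<tau> x) = \<tau> x)"

definition state_morphism_algebra :: "'a set \<Rightarrow> ('f \<Rightarrow> nat) \<Rightarrow> ('f \<Rightarrow> 'a list \<Rightarrow> 'a) \<Rightarrow> ('a \<Rightarrow> 'a) \<Rightarrow> bool" where
  "state_morphism_algebra A ar ops \<tau> \<longleftrightarrow> algebra A ar ops \<and> state_morphism A ar ops \<tau>"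

definition congruence :: "'a set \<Rightarrow> ('f \<Rightarrow> nat) \<Rightarrow> ('f \<Rightarrow> 'a list \<Rightarrow> 'a) \<Rightarrow> 'a rel \<Rightarrow> bool" where
  "congruence A ar ops \<theta> \<longleftrightarrow> equiv A \<theta> \<and>
     (\<forall>f xs ys. length xs = ar f \<and> length ys = ar f \<and> list_all2 (\<lambda>x y. (x, y) \<in> \<theta>) xs ys
        \<longrightarrow> (ops f xs, ops f ys) \<in> \<theta>)"

definition sm_congruence :: "'a set \<Rightarrow> ('f \<Rightarrow> nat) \<Rightarrow> ('f \<Rightarrow> 'a list \<Rightarrow> 'a) \<Rightarrow> ('a \<Rightarrow> 'a) \<Rightarrow> 'a rel \<Rightarrow> bool" where
  "sm_congruence A ar ops \<tau> \<theta> \<longleftrightarrow> congruence A ar ops \<theta> \<and> (\<forall>x y. (x, y) \<in> \<theta> \<longrightarrow> (\<tau> x, \<tau> y) \<in> \<theta>)"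

definition sm_generated :: "'a set \<Rightarrow> ('f \<Rightarrow> nat) \<Rightarrow> ('f \<Rightarrow> 'a list \<Rightarrow> 'a) \<Rightarrow> ('a \<Rightarrow> 'a) \<Rightarrow> 'a rel \<Rightarrow> 'a rel" where
  "sm_generated A ar ops \<tau> \<phi> = \<Inter>{\<theta>. sm_congruence A ar ops \<tau> \<theta> \<and> \<phi> \<subseteq> \<theta>}"

end

theory Submission
  imports Defs
begin

text \<open>Pulling a congruence back along an endomorphism gives a congruence; the kernel of \<tau>
  is the pullback of the identity. Idempotence of \<tau> makes the pullback \<tau>-compatible
  and shows that it restricts to \<phi> on \<tau>(A), since \<tau> fixes \<tau>(A) pointwise.\<close>

definition rel_pullback :: "'a set \<Rightarrow> ('a \<Rightarrow> 'b) \<Rightarrow> 'b rel \<Rightarrow> 'a rel" where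
  "rel_pullback A h \<phi> = {(x, y). x \<in> A \<and> y \<in> A \<and> (h x, h y) \<in> \<phi>}"

lemma equiv_rel_pullback:
  assumes "equiv B \<phi>" and "h ` A \<subseteq> B"
  shows "equiv A (rel_pullback A h \<phi>)"
  using assms unfolding equiv_def refl_on_def sym_def trans_def rel_pullback_def by blast

lemma list_all2_rel_pullbackD:
  assumes "list_all2 (\<lambda>x y. (x, y) \<in> rel_pullback A h \<phi>) xs ys"
  shows "set xs \<subseteq> A" "set ys \<subseteq> A" "list_all2 (\<lambda>u v. (u, v) \<in> \<phi>) (map h xs) (map h ys)"
  using assms by (induction xs ys rule: list_all2_induct) (auto simp: rel_pullback_def)

lemma congruence_rel_pullback:
  assumes "algebra A ar ops" and "endomorphism A ar ops \<tau>"
    and "congruence B ar ops \<phi>" and "\<tau> ` A \<subseteq> B"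
  shows "congruence A ar ops (rel_pullback A \<tau> \<phi>)"
  unfolding congruence_def
proof (intro conjI allI impI)
  have "equiv B \<phi>"
    using assms(3) unfolding congruence_def by (rule conjunct1)
  then show "equiv A (rel_pullback A \<tau> \<phi>)"
    using assms(4) by (rule equiv_rel_pullback)
next
  fix f xs ys
  assume "length xs = ar f \<and> length ys = ar f
    \<and> list_all2 (\<lambda>x y. (x, y) \<in> rel_pullback A \<tau> \<phi>) xs ys"
  then have len: "length xs = ar f" "length ys = ar f"
    and related: "list_all2 (\<lambda>x y. (x, y) \<in> rel_pullback A \<tau> \<phi>) xs ys"
    by simp_all
  note args = list_all2_rel_pullbackD[OF related]
  have closed: "ops f xs \<in> A" "ops f ys \<in> A"
    using assms(1) len args(1,2) unfolding algebra_def by blast+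
  have hom: "\<tau> (ops f xs) = ops f (map \<tau> xs)" "\<tau> (ops f ys) = ops f (map \<tau> ys)"
    using assms(2) len args(1,2) unfolding endomorphism_def by blast+
  have "(ops f (map \<tau> xs), ops f (map \<tau> ys)) \<in> \<phi>"
    using assms(3) len args(3) unfolding congruence_def by simp
  with closed hom show "(ops f xs, ops f ys) \<in> rel_pullback A \<tau> \<phi>"
    unfolding rel_pullback_def by simp
qed

lemma sm_congruence_rel_pullback:
  assumes "state_morphism_algebra A ar ops \<tau>"
    and "congruence B ar ops \<phi>" and "\<tau> ` A \<subseteq> B"
  shows "sm_congruence A ar ops \<tau> (rel_pullback A \<tau> \<phi>)"
proof -
  have alg: "algebra A ar ops" and endo: "endomorphism A ar ops \<tau>"
    and idem: "\<And>x. x \<in> A \<Longrightarrow> \<tau> (\<tau> x) = \<tau> x"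
    using assms(1) unfolding state_morphism_algebra_def state_morphism_def by auto
  have into: "\<forall>x\<in>A. \<tau> x \<in> A"
    using endo unfolding endomorphism_def by (rule conjunct1)
  have "(\<tau> x, \<tau> y) \<in> rel_pullback A \<tau> \<phi>" if "(x, y) \<in> rel_pullback A \<tau> \<phi>" for x y
  proof -
    have "x \<in> A" "y \<in> A" "(\<tau> x, \<tau> y) \<in> \<phi>"
      using that unfolding rel_pullback_def by auto
    then show ?thesis
      using into idem unfolding rel_pullback_def by simp
  qed
  then show ?thesis
    using congruence_rel_pullback[OF alg endo assms(2,3)] unfolding sm_congruence_def by blast
qed

lemma congruence_Id_on:
  assumes "algebra A ar ops"
  shows "congruence A ar ops (Id_on A)"
  unfolding congruence_def
proof (intro conjI allI impI)
  show "equiv A (Id_on A)"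
    by (auto simp: equiv_def refl_on_def sym_def trans_def)
next
  fix f xs ys
  assume args: "length xs = ar f \<and> length ys = ar f \<and> list_all2 (\<lambda>x y. (x, y) \<in> Id_on A) xs ys"
  have "list_all2 (\<lambda>x y. (x, y) \<in> Id_on A) xs ys \<Longrightarrow> xs = ys \<and> set xs \<subseteq> A"
    by (induction xs ys rule: list_all2_induct) auto
  then show "(ops f xs, ops f ys) \<in> Id_on A"
    using assms args unfolding algebra_def by auto
qed

lemma rel_pullback_Id_on:
  assumes "\<tau> ` A \<subseteq> A"
  shows "rel_pullback A \<tau> (Id_on A) = {(x, y). x \<in> A \<and> y \<in> A \<and> \<tau> x = \<tau> y}"
  using assms unfolding rel_pullback_def by auto

lemma rel_pullback_restrict_image:
  assumes into: "\<tau> ` A \<subseteq> A" and idem: "\<And>x. x \<in> A \<Longrightarrow> \<tau> (\<tau> x) = \<tau> x"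
    and \<phi>: "\<phi> \<subseteq> \<tau> ` A \<times> \<tau> ` A"
  shows "rel_pullback A \<tau> \<phi> \<inter> (\<tau> ` A \<times> \<tau> ` A) = \<phi>"
proof (intro equalityI subsetI)
  fix p assume "p \<in> rel_pullback A \<tau> \<phi> \<inter> (\<tau> ` A \<times> \<tau> ` A)"
  then obtain a b where p: "p = (\<tau> a, \<tau> b)" "a \<in> A" "b \<in> A"
    and "(\<tau> (\<tau> a), \<tau> (\<tau> b)) \<in> \<phi>"
    unfolding rel_pullback_def by blast
  then show "p \<in> \<phi>" using idem by simp
next
  fix p assume "p \<in> \<phi>"
  then obtain a b where p: "p = (\<tau> a, \<tau> b)" "a \<in> A" "b \<in> A"
    using \<phi> by blast
  then have "p \<in> \<tau> ` A \<times> \<tau> ` A" and "(\<tau> (\<tau> a), \<tau> (\<tau> b)) = p"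
    by (simp_all add: idem)
  moreover have "\<tau> a \<in> A" "\<tau> b \<in> A"
    using into p by blast+
  ultimately show "p \<in> rel_pullback A \<tau> \<phi> \<inter> (\<tau> ` A \<times> \<tau> ` A)"
    using \<open>p \<in> \<phi>\<close> p(1) unfolding rel_pullback_def by auto
qed

lemma sm_generated_least:
  assumes "sm_congruence A ar ops \<tau> \<theta>" and "\<phi> \<subseteq> \<theta>"
  shows "sm_generated A ar ops \<tau> \<phi> \<subseteq> \<theta>"
  using assms unfolding sm_generated_def by blast

theorem lemma3p2:
  fixes A :: "'a set" and ar :: "'f \<Rightarrow> nat" and ops :: "'f \<Rightarrow> 'a list \<Rightarrow> 'a"
    and \<tau> :: "'a \<Rightarrow> 'a" and \<phi> :: "'a rel"
  assumes "state_morphism_algebra A ar ops \<tau>"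
    and "congruence (\<tau> ` A) ar ops \<phi>"
  shows "sm_congruence A ar ops \<tau> {(x, y). x \<in> A \<and> y \<in> A \<and> (\<tau> x, \<tau> y) \<in> \<phi>}
       \<and> {(x, y). x \<in> A \<and> y \<in> A \<and> (\<tau> x, \<tau> y) \<in> \<phi>} \<inter> (\<tau> ` A \<times> \<tau> ` A) = \<phi>
       \<and> sm_congruence A ar ops \<tau> {(x, y). x \<in> A \<and> y \<in> A \<and> \<tau> x = \<tau> y}
       \<and> \<phi> \<subseteq> {(x, y). x \<in> A \<and> y \<in> A \<and> (\<tau> x, \<tau> y) \<in> \<phi>}
       \<and> sm_generated A ar ops \<tau> \<phi> \<subseteq> {(x, y). x \<in> A \<and> y \<in> A \<and> (\<tau> x, \<tau> y) \<in> \<phi>}"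
proof -
  have alg: "algebra A ar ops" and into: "\<tau> ` A \<subseteq> A"
    and idem: "\<And>x. x \<in> A \<Longrightarrow> \<tau> (\<tau> x) = \<tau> x"
    using assms(1)
    unfolding state_morphism_algebra_def state_morphism_def endomorphism_def by auto
  have "\<phi> \<subseteq> \<tau> ` A \<times> \<tau> ` A"
    using assms(2) equiv_type unfolding congruence_def by blast
  with into idem have restrict: "rel_pullback A \<tau> \<phi> \<inter> (\<tau> ` A \<times> \<tau> ` A) = \<phi>"
    by (rule rel_pullback_restrict_image)
  have pullback: "sm_congruence A ar ops \<tau> (rel_pullback A \<tau> \<phi>)"
    by (rule sm_congruence_rel_pullback[OF assms subset_refl])
  have kernel: "sm_congruence A ar ops \<tau> {(x, y). x \<in> A \<and> y \<in> A \<and> \<tau> x = \<tau> y}"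
    using sm_congruence_rel_pullback[OF assms(1) congruence_Id_on[OF alg] into]
    unfolding rel_pullback_Id_on[OF into] .
  have contains: "\<phi> \<subseteq> rel_pullback A \<tau> \<phi>"
    using Int_lower1[of "rel_pullback A \<tau> \<phi>" "\<tau> ` A \<times> \<tau> ` A"] unfolding restrict .
  have generated: "sm_generated A ar ops \<tau> \<phi> \<subseteq> rel_pullback A \<tau> \<phi>"
    using sm_generated_least[OF pullback contains] .
  show ?thesis
    using pullback restrict kernel contains generated unfolding rel_pullback_def
    by (intro conjI)
qed

end
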